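(* Let $n,M\ge1$ be integers, $\mathcal X=\{x^{(1)},\dots,x^{(L)}\}\subset\mathbb C$ a set of $L$ channel input symbols, $\sigma^2>0$, $g:\mathbb C\to[0,+\infty]$ measurable, $\epsilon>0$, $B,\delta\in\mathbb R$. Let $\mathscr C$ be a homogeneous $(n,M,\epsilon,B,\delta)$-code (as defined in the context), let $p_\ell=\int_{\mathcal E_\ell}f_{Y|X}(y|x^{(\ell)})dy$ for $\ell=1,\dots,L$, assume $\sum_jp_j>0$, and let $Q(x^{(\ell)})=p_\ell/\sum_{j=1}^Lp_j$. Then $$\epsilon\ge1-\exp\Big(-nH(P_{\mathscr C})-nD(P_{\mathscr C}\|Q)+n\log\sum_{j=1}^Lp_j\Big).$$
   Context: Channel: outputs $\boldsymbol Y=\boldsymbol x+\boldsymbol N_1$, $\boldsymbol Z=\boldsymbol x+\boldsymbol N_2$, all noise components i.i.d. complex circularly symmetric Gaussian with real and imaginary parts of zero mean and variance $\sigma^2/2$; $f_{Y|X}(y|x)=\frac1{\pi\sigma^2}\exp(-|y-x|^2/\sigma^2)$, $f_{\boldsymbol Y|\boldsymbol X}(\boldsymbol y|\boldsymbol x)=\prod_tf_{Y|X}(y_t|x_t)$ (same for $\boldsymbol Z$). An $(n,M)$-code is $\mathscr C=\{(\boldsymbol u(i),\mathcal D_i)\}_{i=1}^M$ with $\boldsymbol u(i)\in\mathcal X^n$, $|u_t(i)|\le P$ for a fixed $P>0$, pairwise disjoint measurable $\mathcal D_i\subseteq\mathbb C^n$, $M\le2^{n\lfloor\log_2L\rfloor}$;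 decoding sets are of product form $\mathcal D_i=\mathcal D_{i,1}\times\cdots\times\mathcal D_{i,n}$, $\mathcal D_{i,t}\subseteq\mathbb C$ measurable. $\gamma_i(\mathscr C)=1-\int_{\mathcal D_i}f_{\boldsymbol Y|\boldsymbol X}(\boldsymbol y|\boldsymbol u(i))d\boldsymbol y$, $\gamma=\frac1M\sum_i\gamma_i$; $(n,M,\epsilon)$-code: $\gamma<\epsilon$. With $\bar g(\boldsymbol z)=\frac1n\sum_tg(z_t)$, $\theta_i=\Pr[\bar g(\boldsymbol Z)<B\mid\boldsymbol X=\boldsymbol u(i)]$, $\theta=\frac1M\sum_i\theta_i$; $(n,M,\epsilon,B,\delta)$-code: $(n,M,\epsilon)$-code with $\theta<\delta$. Types: $P_{\boldsymbol u(i)}(x^{(\ell)})=\frac1n\#\{t:u_t(i)=x^{(\ell)}\}$, $P_{\mathscr C}=\frac1M\sum_iP_{\boldsymbol u(i)}$. For each $\ell$, $\mathcal E_\ell=\mathcal D_{i^\star,t^\star}$ where $(i^\star,t^\star)$ minimizes $\int_{\mathcal D_{i,t}}f_{Y|X}(y|x^{(\ell)})dy$ over $\{1,\dots,M\}\times\{1,\dots,n\}$. The code is homogeneous if $P_{\boldsymbol u(i)}=P_{\mathscr C}$ for every $i$, and $\mathcal D_{i,t}=\mathcal E_\ell$ whenever $u_t(i)=x^{(\ell)}$. $H$ is entropy and $D(P\|Q)=\sum_xP(x)\log\frac{P(x)}{Q(x)}$ relative entropy, with natural logarithms. *)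

theory Defs
  imports "HOL-Probability.Probability"
begin

definition fYX :: "real \<Rightarrow> complex \<Rightarrow> complex \<Rightarrow> real" where
  "fYX s2 y x = exp (- ((cmod (y - x)) ^ 2) / s2) / (pi * s2)"

definition chan :: "real \<Rightarrow> complex \<Rightarrow> complex measure" where
  "chan s2 x = density lborel (\<lambda>y. ennreal (fYX s2 y x))"

definition out :: "real \<Rightarrow> nat \<Rightarrow> (nat \<Rightarrow> complex) \<Rightarrow> (nat \<Rightarrow> complex) measure" where
  "out s2 n c = PiM {1..n} (\<lambda>t. chan s2 (c t))"

text \<open>Codewords u i t (i in 1..M, t in 1..n), decoding sets D i = Pi_E {1..n} (D i).\<close>
definition nM_code :: "nat \<Rightarrow> (nat \<Rightarrow> complex) \<Rightarrow> real \<Rightarrow> nat \<Rightarrow> nat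
    \<Rightarrow> (nat \<Rightarrow> nat \<Rightarrow> complex) \<Rightarrow> (nat \<Rightarrow> nat \<Rightarrow> complex set) \<Rightarrow> bool" where
  "nM_code L xs Pw n M u D \<longleftrightarrow>
     (\<forall>i\<in>{1..M}. \<forall>t\<in>{1..n}. u i t \<in> xs ` {1..L} \<and> cmod (u i t) \<le> Pw) \<and>
     (\<forall>i\<in>{1..M}. \<forall>t\<in>{1..n}. D i t \<in> sets lborel) \<and>
     (\<forall>i\<in>{1..M}. \<forall>j\<in>{1..M}. i \<noteq> j \<longrightarrow> PiE {1..n} (D i) \<inter> PiE {1..n} (D j) = {}) \<and>
     M \<le> 2 ^ (n * nat \<lfloor>log 2 (real L)\<rfloor>)"

definition gamma_i :: "real \<Rightarrow> nat \<Rightarrow> (nat \<Rightarrow> nat \<Rightarrow> complex) \<Rightarrow> (nat \<Rightarrow> nat \<Rightarrow> complex set) \<Rightarrow> nat \<Rightarrow> real" where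
  "gamma_i s2 n u D i = 1 - measure (out s2 n (u i)) (PiE {1..n} (D i))"

definition gamma :: "real \<Rightarrow> nat \<Rightarrow> nat \<Rightarrow> (nat \<Rightarrow> nat \<Rightarrow> complex) \<Rightarrow> (nat \<Rightarrow> nat \<Rightarrow> complex set) \<Rightarrow> real" where
  "gamma s2 n M u D = (\<Sum>i\<in>{1..M}. gamma_i s2 n u D i) / real M"

definition gbar :: "(complex \<Rightarrow> ereal) \<Rightarrow> nat \<Rightarrow> (nat \<Rightarrow> complex) \<Rightarrow> ereal" where
  "gbar g n z = (\<Sum>t\<in>{1..n}. g (z t)) / ereal (real n)"

definition theta_i :: "real \<Rightarrow> nat \<Rightarrow> (complex \<Rightarrow> ereal) \<Rightarrow> real \<Rightarrow> (nat \<Rightarrow> nat \<Rightarrow> complex) \<Rightarrow> nat \<Rightarrow> real" where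
  "theta_i s2 n g B u i =
     measure (out s2 n (u i)) {z \<in> space (out s2 n (u i)). gbar g n z < ereal B}"

definition theta :: "real \<Rightarrow> nat \<Rightarrow> nat \<Rightarrow> (complex \<Rightarrow> ereal) \<Rightarrow> real \<Rightarrow> (nat \<Rightarrow> nat \<Rightarrow> complex) \<Rightarrow> real" where
  "theta s2 n M g B u = (\<Sum>i\<in>{1..M}. theta_i s2 n g B u i) / real M"

definition word_type :: "nat \<Rightarrow> (nat \<Rightarrow> complex) \<Rightarrow> (nat \<Rightarrow> complex) \<Rightarrow> nat \<Rightarrow> real" where
  "word_type n xs w l = real (card {t\<in>{1..n}. w t = xs l}) / real n"

definition code_type :: "nat \<Rightarrow> nat \<Rightarrow> (nat \<Rightarrow> complex) \<Rightarrow> (nat \<Rightarrow> nat \<Rightarrow> complex) \<Rightarrow> nat \<Rightarrow> real" where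
  "code_type n M xs u l = (\<Sum>i\<in>{1..M}. word_type n xs (u i) l) / real M"

definition is_E_choice :: "real \<Rightarrow> nat \<Rightarrow> nat \<Rightarrow> (nat \<Rightarrow> nat \<Rightarrow> complex set) \<Rightarrow> complex \<Rightarrow> complex set \<Rightarrow> bool" where
  "is_E_choice s2 n M D x E \<longleftrightarrow>
     (\<exists>i\<in>{1..M}. \<exists>t\<in>{1..n}. E = D i t \<and>
        (\<forall>i'\<in>{1..M}. \<forall>t'\<in>{1..n}. measure (chan s2 x) (D i t) \<le> measure (chan s2 x) (D i' t')))"

definition homogeneous :: "nat \<Rightarrow> nat \<Rightarrow> nat \<Rightarrow> (nat \<Rightarrow> complex) \<Rightarrow> (nat \<Rightarrow> nat \<Rightarrow> complex)
    \<Rightarrow> (nat \<Rightarrow> nat \<Rightarrow> complex set) \<Rightarrow> (nat \<Rightarrow> complex set) \<Rightarrow> bool" where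
  "homogeneous L n M xs u D E \<longleftrightarrow>
     (\<forall>i\<in>{1..M}. \<forall>l\<in>{1..L}. word_type n xs (u i) l = code_type n M xs u l) \<and>
     (\<forall>i\<in>{1..M}. \<forall>t\<in>{1..n}. \<forall>l\<in>{1..L}. u i t = xs l \<longrightarrow> D i t = E l)"

definition entropy_fin :: "nat set \<Rightarrow> (nat \<Rightarrow> real) \<Rightarrow> real" where
  "entropy_fin A P = - (\<Sum>l\<in>A. if P l = 0 then 0 else P l * ln (P l))"

definition kl_div :: "nat set \<Rightarrow> (nat \<Rightarrow> real) \<Rightarrow> (nat \<Rightarrow> real) \<Rightarrow> ereal" where
  "kl_div A P Q = (if \<exists>l\<in>A. P l > 0 \<and> Q l = 0 then \<infinity>
     else ereal (\<Sum>l\<in>A. if P l = 0 then 0 else P l * ln (P l / Q l)))"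

definition exp_ereal :: "ereal \<Rightarrow> ereal" where
  "exp_ereal x = (case x of ereal r \<Rightarrow> ereal (exp r) | PInfty \<Rightarrow> \<infinity> | MInfty \<Rightarrow> 0)"

end

theory Submission
  imports Defs
begin

(* For a homogeneous code each codeword contains the symbol x^(l) exactly n P_C(l) times and is
   decoded componentwise through E_l, so every codeword is decoded correctly with the same
   probability prod_l p_l^(n P_C(l)), and gamma is 1 minus this product. Writing
   ln Q = ln p - ln (sum_j p_j) turns the exponent -n H(P_C) - n D(P_C||Q) + n ln (sum_j p_j)
   into n sum_l P_C(l) ln p_l, whose exponential is that product; if p_l = 0 for some l with
   P_C(l) > 0, then both the product and exp(-infinity) vanish. So the bound holds with gamma
   in place of epsilon. *)

lemma prod_comp_eq_prod_power_card:
  assumes "finite S" "finite A" "inj_on xs A" "w ` S \<subseteq> xs ` A"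
  shows "(\<Prod>t\<in>S. f (w t)) = (\<Prod>l\<in>A. f (xs l) ^ card {t\<in>S. w t = xs l})"
proof -
  have "(\<Prod>t\<in>S. f (w t)) = (\<Prod>x\<in>xs ` A. \<Prod>t\<in>{t\<in>S. w t = x}. f (w t))"
    using assms by (intro prod.group[symmetric]) auto
  also have "\<dots> = (\<Prod>x\<in>xs ` A. f x ^ card {t\<in>S. w t = x})"
    by (intro prod.cong) auto
  also have "\<dots> = (\<Prod>l\<in>A. f (xs l) ^ card {t\<in>S. w t = xs l})"
    using assms(3) by (simp add: prod.reindex)
  finally show ?thesis .
qed

lemma card_eq_sum_card_fibres:
  assumes "finite S" "finite A" "inj_on xs A" "w ` S \<subseteq> xs ` A"
  shows "card S = (\<Sum>l\<in>A. card {t\<in>S. w t = xs l})"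
proof -
  have "card S = (\<Sum>x\<in>xs ` A. card {t\<in>S. w t = x})"
    using sum.group[of S "xs ` A" w "\<lambda>_. 1::nat"] assms by simp
  also have "\<dots> = (\<Sum>l\<in>A. card {t\<in>S. w t = xs l})"
    using assms(3) by (simp add: sum.reindex)
  finally show ?thesis .
qed

lemma sets_chan [simp]: "sets (chan s2 x) = sets borel"
  by (simp add: chan_def)

lemma sigma_finite_chan: "sigma_finite_measure (chan s2 x)"
  unfolding chan_def
  by (subst sigma_finite_measure.sigma_finite_iff_density_finite[OF sigma_finite_lborel])
     (auto simp: fYX_def)

lemma enn2real_prod: "enn2real (\<Prod>i\<in>A. f i) = (\<Prod>i\<in>A. enn2real (f i))"
  by (induct A rule: infinite_finite_induct) (auto simp: enn2real_mult)

lemma measure_out_PiE: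
  assumes "\<And>t. t \<in> {1..n} \<Longrightarrow> D t \<in> sets borel"
  shows "measure (out s2 n w) (PiE {1..n} D) = (\<Prod>t\<in>{1..n}. measure (chan s2 (w t)) (D t))"
proof -
  interpret product_sigma_finite "\<lambda>t. chan s2 (w t)"
    by (simp add: product_sigma_finite_def sigma_finite_chan)
  show ?thesis
    unfolding out_def measure_def
    by (subst emeasure_PiM) (auto simp: assms enn2real_prod)
qed

lemma measure_out_PiE_eq_prod_power:
  fixes L :: nat
  assumes "inj_on xs {1..L}" "w ` {1..n} \<subseteq> xs ` {1..L}"
    and "\<And>t. t \<in> {1..n} \<Longrightarrow> D t \<in> sets borel"
    and "\<And>t l. t \<in> {1..n} \<Longrightarrow> l \<in> {1..L} \<Longrightarrow> w t = xs l \<Longrightarrow> D t = E l"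
  shows "measure (out s2 n w) (PiE {1..n} D)
    = (\<Prod>l\<in>{1..L}. measure (chan s2 (xs l)) (E l) ^ card {t\<in>{1..n}. w t = xs l})"
proof -
  have "measure (out s2 n w) (PiE {1..n} D) = (\<Prod>t\<in>{1..n}. measure (chan s2 (w t)) (D t))"
    using assms(3) by (rule measure_out_PiE)
  also have "\<dots> = (\<Prod>t\<in>{1..n}. measure (chan s2 (w t)) (E (inv_into {1..L} xs (w t))))"
  proof (intro prod.cong refl)
    fix t assume "t \<in> {1..n}"
    with assms(2) have "w t \<in> xs ` {1..L}" by blast
    then have "inv_into {1..L} xs (w t) \<in> {1..L}" "w t = xs (inv_into {1..L} xs (w t))"
      by (simp_all only: inv_into_into f_inv_into_f)
    with assms(4) \<open>t \<in> {1..n}\<close> show "measure (chan s2 (w t)) (D t)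
        = measure (chan s2 (w t)) (E (inv_into {1..L} xs (w t)))"
      by metis
  qed
  also have "\<dots> = (\<Prod>l\<in>{1..L}. measure (chan s2 (xs l)) (E l) ^ card {t\<in>{1..n}. w t = xs l})"
    using assms(1,2) by (subst prod_comp_eq_prod_power_card[where xs = xs]) (auto simp: inv_into_f_f)
  finally show ?thesis .
qed

lemma card_symbol_homogeneous:
  assumes "n \<ge> 1" "homogeneous L n M xs u D E" "i \<in> {1..M}" "l \<in> {1..L}"
  shows "real (card {t\<in>{1..n}. u i t = xs l}) = real n * code_type n M xs u l"
  using assms unfolding homogeneous_def word_type_def by (auto simp: field_simps)

lemma gamma_homogeneous:
  fixes L :: nat
  assumes "n \<ge> 1" "M \<ge> 1" "inj_on xs {1..L}"
    and "nM_code L xs Pw n M u D" "homogeneous L n M xs u D E"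
  shows "gamma s2 n M u D
    = 1 - (\<Prod>l\<in>{1..L}. measure (chan s2 (xs l)) (E l) ^ card {t\<in>{1..n}. u 1 t = xs l})"
    (is "_ = 1 - ?R")
proof -
  have "gamma_i s2 n u D i = 1 - ?R" if i: "i \<in> {1..M}" for i
  proof -
    have "measure (out s2 n (u i)) (PiE {1..n} (D i))
        = (\<Prod>l\<in>{1..L}. measure (chan s2 (xs l)) (E l) ^ card {t\<in>{1..n}. u i t = xs l})"
      using assms(3-5) i unfolding nM_code_def homogeneous_def
      by (intro measure_out_PiE_eq_prod_power) auto
    also have "\<dots> = ?R"
    proof (intro prod.cong refl)
      fix l assume l: "l \<in> {1..L}"
      have "real (card {t\<in>{1..n}. u i t = xs l}) = real (card {t\<in>{1..n}. u 1 t = xs l})"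
        using card_symbol_homogeneous[OF assms(1,5) i l]
          card_symbol_homogeneous[OF assms(1,5) _ l, of 1] assms(2) by simp
      then show "measure (chan s2 (xs l)) (E l) ^ card {t\<in>{1..n}. u i t = xs l}
          = measure (chan s2 (xs l)) (E l) ^ card {t\<in>{1..n}. u 1 t = xs l}"
        by (simp only: of_nat_eq_iff)
    qed
    finally show ?thesis
      unfolding gamma_i_def by simp
  qed
  then show ?thesis
    using assms(2) unfolding gamma_def by simp
qed

lemma kl_div_normalized_eq:
  fixes P p :: "nat \<Rightarrow> real"
  assumes "finite A" "\<forall>l\<in>A. P l \<ge> 0" "(\<Sum>l\<in>A. P l) = 1" "S > 0"
    and "\<forall>l\<in>A. P l > 0 \<longrightarrow> p l > 0"
  shows "kl_div A P (\<lambda>l. p l / S)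
    = ereal (- entropy_fin A P + ln S - (\<Sum>l\<in>A. if P l = 0 then 0 else P l * ln (p l)))"
proof -
  have "(if P l = 0 then 0 else P l * ln (P l / (p l / S)))
      = (if P l = 0 then 0 else P l * ln (P l)) + P l * ln S - (if P l = 0 then 0 else P l * ln (p l))"
    if "l \<in> A" for l
    using assms(2,4,5) that by (auto simp: ln_div ln_mult algebra_simps less_le)
  then have "(\<Sum>l\<in>A. if P l = 0 then 0 else P l * ln (P l / (p l / S)))
      = - entropy_fin A P + ln S - (\<Sum>l\<in>A. if P l = 0 then 0 else P l * ln (p l))"
    using assms(3) unfolding entropy_fin_def
    by (simp add: sum.distrib sum_subtractf flip: sum_distrib_right)
  moreover have "\<not> (\<exists>l\<in>A. P l > 0 \<and> p l / S = 0)"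
    using assms(4,5) by auto
  ultimately show ?thesis
    unfolding kl_div_def by simp
qed

lemma exp_sum_ln_eq_prod_power:
  fixes c :: "nat \<Rightarrow> nat" and P p :: "nat \<Rightarrow> real"
  assumes "finite A" "\<forall>l\<in>A. real (c l) = r * P l" "\<forall>l\<in>A. c l > 0 \<longrightarrow> p l > 0"
  shows "exp (r * (\<Sum>l\<in>A. if P l = 0 then 0 else P l * ln (p l))) = (\<Prod>l\<in>A. p l ^ c l)"
proof -
  have "exp (r * (if P l = 0 then 0 else P l * ln (p l))) = p l ^ c l" if l: "l \<in> A" for l
  proof (cases "c l = 0")
    case True
    then show ?thesis
      using assms(2) l by auto
  next
    case False
    then have "r * (if P l = 0 then 0 else P l * ln (p l)) = real (c l) * ln (p l)"
      using assms(2) l by auto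
    then show ?thesis
      using assms(3) l False by (simp add: exp_of_nat_mult)
  qed
  then show ?thesis
    using assms(1) by (simp add: sum_distrib_left exp_sum)
qed

lemma exp_ereal_entropy_kl_div_eq_prod_power:
  fixes c :: "nat \<Rightarrow> nat" and P p :: "nat \<Rightarrow> real"
  assumes "finite A" "n > 0" "\<forall>l\<in>A. real (c l) = real n * P l" "(\<Sum>l\<in>A. c l) = n"
    and "\<forall>l\<in>A. p l \<ge> 0" "S > 0"
  shows "exp_ereal (ereal (- real n * entropy_fin A P + real n * ln S)
      - ereal (real n) * kl_div A P (\<lambda>l. p l / S)) = ereal (\<Prod>l\<in>A. p l ^ c l)"
proof (cases "\<exists>l\<in>A. P l > 0 \<and> p l = 0")
  case True
  then obtain l where l: "l \<in> A" "P l > 0" "p l = 0"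
    by blast
  have "real (c l) > 0"
    using assms(2,3) l by simp
  then have "(\<Prod>l\<in>A. p l ^ c l) = 0"
    using assms(1) l by (intro prod_zero) (auto intro!: bexI[of _ l])
  moreover have "kl_div A P (\<lambda>l. p l / S) = \<infinity>"
    using l unfolding kl_div_def by auto
  ultimately show ?thesis
    using assms(2) by (simp add: exp_ereal_def)
next
  case False
  have P_nonneg: "\<forall>l\<in>A. P l \<ge> 0"
    using assms(2,3) by (metis of_nat_0_le_iff of_nat_0_less_iff zero_le_mult_iff not_le)
  have "real n * (\<Sum>l\<in>A. P l) = (\<Sum>l\<in>A. real (c l))"
    using assms(3) by (simp add: sum_distrib_left)
  also have "\<dots> = real n"
    using assms(4) by (simp flip: of_nat_sum)
  finally have "real n * (\<Sum>l\<in>A. P l) = real n" .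
  then have P_sum: "(\<Sum>l\<in>A. P l) = 1"
    using assms(2) by simp
  have p_pos: "\<forall>l\<in>A. P l > 0 \<longrightarrow> p l > 0"
    using False assms(5) by (auto simp: less_le)
  moreover have "\<forall>l\<in>A. c l > 0 \<longrightarrow> P l > 0"
    using assms(2,3) P_nonneg by (metis less_le mult_zero_right of_nat_0_less_iff)
  ultimately have "exp (real n * (\<Sum>l\<in>A. if P l = 0 then 0 else P l * ln (p l)))
      = (\<Prod>l\<in>A. p l ^ c l)"
    using assms(1,3) by (intro exp_sum_ln_eq_prod_power) auto
  moreover have "kl_div A P (\<lambda>l. p l / S)
      = ereal (- entropy_fin A P + ln S - (\<Sum>l\<in>A. if P l = 0 then 0 else P l * ln (p l)))"
    using assms(1) P_nonneg P_sum assms(6) p_pos by (rule kl_div_normalized_eq)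
  ultimately show ?thesis
    by (simp add: exp_ereal_def algebra_simps)
qed

theorem corollary2:
  fixes n M L :: nat and xs :: "nat \<Rightarrow> complex" and s2 Pw \<epsilon> B \<delta> :: real
    and g :: "complex \<Rightarrow> ereal"
    and u :: "nat \<Rightarrow> nat \<Rightarrow> complex" and D :: "nat \<Rightarrow> nat \<Rightarrow> complex set"
    and E :: "nat \<Rightarrow> complex set"
  assumes n_pos: "n \<ge> 1" and M_pos: "M \<ge> 1"
    and alphabet: "inj_on xs {1..L}"
    and s2_pos: "s2 > 0" and Pw_pos: "Pw > 0"
    and g_meas: "g \<in> borel_measurable borel" and g_nonneg: "\<forall>z. g z \<ge> 0"
    and eps_pos: "\<epsilon> > 0"
    and code: "nM_code L xs Pw n M u D"
    and gamma_lt: "gamma s2 n M u D < \<epsilon>"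
    and theta_lt: "theta s2 n M g B u < \<delta>"
    and E_def: "\<forall>l\<in>{1..L}. is_E_choice s2 n M D (xs l) (E l)"
    and homog: "homogeneous L n M xs u D E"
  defines "p \<equiv> \<lambda>l. measure (chan s2 (xs l)) (E l)"
  defines "S \<equiv> (\<Sum>j\<in>{1..L}. p j)"
  defines "Q \<equiv> \<lambda>l. p l / S"
  defines "PC \<equiv> code_type n M xs u"
  assumes S_pos: "S > 0"
  shows "ereal \<epsilon> \<ge> 1 - exp_ereal (ereal (- real n * entropy_fin {1..L} PC + real n * ln S)
                                    - ereal (real n) * kl_div {1..L} PC Q)"
proof -
  define c where "c l = card {t\<in>{1..n}. u 1 t = xs l}" for l
  have word: "u 1 ` {1..n} \<subseteq> xs ` {1..L}"
    using code M_pos unfolding nM_code_def by auto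
  have "\<forall>l\<in>{1..L}. real (c l) = real n * PC l"
    using card_symbol_homogeneous[OF n_pos homog] M_pos unfolding c_def PC_def by simp
  moreover have "(\<Sum>l\<in>{1..L}. c l) = n"
    using card_eq_sum_card_fibres[OF _ _ alphabet word] unfolding c_def by simp
  ultimately have "exp_ereal (ereal (- real n * entropy_fin {1..L} PC + real n * ln S)
      - ereal (real n) * kl_div {1..L} PC Q) = ereal (\<Prod>l\<in>{1..L}. p l ^ c l)"
    using n_pos S_pos unfolding Q_def p_def
    by (intro exp_ereal_entropy_kl_div_eq_prod_power) auto
  moreover have "gamma s2 n M u D = 1 - (\<Prod>l\<in>{1..L}. p l ^ c l)"
    using gamma_homogeneous[OF n_pos M_pos alphabet code homog] unfolding p_def c_def .
  ultimately show ?thesis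
    using gamma_lt by (simp add: one_ereal_def)
qed

end
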